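(* Let $f:E\to\mathbb{R}$ be $L$-smooth (not necessarily convex) and suppose $f$ attains its minimum at a point $x_*$. Let Algorithm AGMsDR (either option) be run from $x^0$ producing $y^0,\dots,y^N$ and $x^0,\dots,x^{N+1}$, with $N\ge 1$. Then $$\min_{k=0,\dots,N}\|\nabla f(y^k)\|_*^2\le\frac{2L\,(f(x^0)-f(x_* ))}{N}.$$
   Context: $E$ is a finite-dimensional real vector space with a norm $\|\cdot\|$; $E^*$ is its dual, $\langle g,x\rangle$ denotes the value of $g\in E^*$ at $x\in E$, and $\|g\|_*=\max\{\langle g,x\rangle:\|x\|\le 1\}$. For $g\in E^*$, $g^{\#}$ denotes a (fixed) element $s\in E$ with $\|s\|\le 1$ and $\langle g,s\rangle=\|g\|_*$. A prox-function $d:E\to\mathbb{R}$ is continuously differentiable, convex, $1$-strongly convex with respect to $\|\cdot\|$ (i.e. $d(y)-d(x)-\langle\nabla d(x),y-x\rangle\ge\frac12\|y-x\|^2$ for all $x,y\in E$) and satisfies $\min_E d=0$; its Bregman divergence is $V(x,z)=d(x)-d(z)-\langle\nabla d(z),x-z\rangle$. A function $f:E\to\mathbb{R}$ is $L$-smooth ($L>0$) if it is continuously differentiable and $\|\nabla f(x)-\nabla f(y)\|_*\le L\|x-y\|$ for all $x,y\in E$. Algorithm AGMsDR (input $x^0\in E$, and $L$ for Option (a)): set $A_0=0$, $v^0=x^0$, $\psi_0(x)=V(x,x^0)$. For $k=0,1,2,\dots$: 1. Choose $\beta_k\in\arg\min_{\beta\in[0,1]} f(v^k+\beta(x^k-v^k))$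 (a global minimizer over the interval) and set $y^k=v^k+\beta_k(x^k-v^k)$. 2. Option (a): $x^{k+1}\in\arg\min_{x\in E}\{f(y^k)+\langle\nabla f(y^k),x-y^k\rangle+\frac L2\|x-y^k\|^2\}$, and $a_{k+1}>0$ solves $\frac{a_{k+1}^2}{A_k+a_{k+1}}=\frac1L$. Option (b): $h_{k+1}\in\arg\min_{h\ge0} f(y^k-h(\nabla f(y^k))^{\#})$, $x^{k+1}=y^k-h_{k+1}(\nabla f(y^k))^{\#}$, and $a_{k+1}$ is the largest solution of $f(y^k)-\frac{a_{k+1}^2}{2(A_k+a_{k+1})}\|\nabla f(y^k)\|_*^2=f(x^{k+1})$. 3. $A_{k+1}=A_k+a_{k+1}$; $\psi_{k+1}(x)=\psi_k(x)+a_{k+1}\{f(y^k)+\langle\nabla f(y^k),x-y^k\rangle\}$; $v^{k+1}=\arg\min_{x\in E}\psi_{k+1}(x)$. It is assumed that all the minima in the algorithm are attained, and that $\nabla f(y^k)\neq 0$ for all iterations considered (otherwise $y^k$ is a stationary point and the method stops). *)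

theory Defs
  imports "HOL-Analysis.Analysis"
begin

text \<open>E is modelled by a finite-dimensional real type 'a::euclidean_space carrying an
  arbitrary (not necessarily Euclidean) norm nrm. The dual space E* is identified with 'a
  via the inner product: g represents the functional x \<mapsto> g \<bullet> x.
  Gradients are the corresponding Riesz representatives.\<close>

definition is_norm :: "('a::real_vector \<Rightarrow> real) \<Rightarrow> bool" where
  "is_norm nrm \<longleftrightarrow>
     (\<forall>x. 0 \<le> nrm x) \<and> (\<forall>x. nrm x = 0 \<longleftrightarrow> x = 0) \<and>
     (\<forall>c x. nrm (c *\<^sub>R x) = \<bar>c\<bar> * nrm x) \<and>
     (\<forall>x y. nrm (x + y) \<le> nrm x + nrm y)"

definition dual_norm :: "('a::real_inner \<Rightarrow> real) \<Rightarrow> 'a \<Rightarrow> real" where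
  "dual_norm nrm g = Sup ((\<lambda>x. g \<bullet> x) ` {x. nrm x \<le> 1})"

definition L_smooth :: "('a::real_inner \<Rightarrow> real) \<Rightarrow> ('a \<Rightarrow> real) \<Rightarrow> ('a \<Rightarrow> 'a) \<Rightarrow> real \<Rightarrow> bool" where
  "L_smooth nrm f gf L \<longleftrightarrow> L > 0 \<and> (\<forall>x. GDERIV f x :> gf x) \<and> continuous_on UNIV gf \<and>
     (\<forall>x y. dual_norm nrm (gf x - gf y) \<le> L * nrm (x - y))"

definition prox_function :: "('a::real_inner \<Rightarrow> real) \<Rightarrow> ('a \<Rightarrow> real) \<Rightarrow> ('a \<Rightarrow> 'a) \<Rightarrow> bool" where
  "prox_function nrm d gd \<longleftrightarrow> (\<forall>x. GDERIV d x :> gd x) \<and> continuous_on UNIV gd \<and>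
     convex_on UNIV d \<and>
     (\<forall>x y. d y - d x - gd x \<bullet> (y - x) \<ge> (1/2) * (nrm (y - x))\<^sup>2) \<and>
     (\<exists>x. d x = 0) \<and> (\<forall>x. d x \<ge> 0)"

definition bregman :: "('a::real_inner \<Rightarrow> real) \<Rightarrow> ('a \<Rightarrow> 'a) \<Rightarrow> 'a \<Rightarrow> 'a \<Rightarrow> real" where
  "bregman d gd x z = d x - d z - gd z \<bullet> (x - z)"

definition psi :: "('a::real_inner \<Rightarrow> real) \<Rightarrow> ('a \<Rightarrow> 'a) \<Rightarrow> ('a \<Rightarrow> real) \<Rightarrow> ('a \<Rightarrow> 'a)
    \<Rightarrow> 'a \<Rightarrow> (nat \<Rightarrow> real) \<Rightarrow> (nat \<Rightarrow> 'a) \<Rightarrow> nat \<Rightarrow> 'a \<Rightarrow> real" where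
  "psi d gd f gf x0 a y k x =
     bregman d gd x x0 + (\<Sum>i<k. a (Suc i) * (f (y i) + gf (y i) \<bullet> (x - y i)))"

definition AGMsDR_common where
  "AGMsDR_common f gf d gd N x0 x y v A a \<beta> \<longleftrightarrow>
     A 0 = 0 \<and> v 0 = x0 \<and> x 0 = x0 \<and>
     (\<forall>k\<le>N.
        \<beta> k \<in> {0..1} \<and>
        (\<forall>b\<in>{0..1::real}. f (v k + \<beta> k *\<^sub>R (x k - v k)) \<le> f (v k + b *\<^sub>R (x k - v k))) \<and>
        y k = v k + \<beta> k *\<^sub>R (x k - v k) \<and>
        A (Suc k) = A k + a (Suc k) \<and>
        (\<forall>z. psi d gd f gf x0 a y (Suc k) (v (Suc k)) \<le> psi d gd f gf x0 a y (Suc k) z))"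

definition AGMsDR_option_a where
  "AGMsDR_option_a nrm f gf L N x y A a \<longleftrightarrow>
     (\<forall>k\<le>N.
        (\<forall>z. f (y k) + gf (y k) \<bullet> (x (Suc k) - y k) + L / 2 * (nrm (x (Suc k) - y k))\<^sup>2
             \<le> f (y k) + gf (y k) \<bullet> (z - y k) + L / 2 * (nrm (z - y k))\<^sup>2) \<and>
        a (Suc k) > 0 \<and> (a (Suc k))\<^sup>2 / (A k + a (Suc k)) = 1 / L)"

definition AGMsDR_option_b where
  "AGMsDR_option_b nrm sharp f gf N x y A a h \<longleftrightarrow>
     (\<forall>k\<le>N.
        h (Suc k) \<ge> 0 \<and>
        (\<forall>t\<ge>0. f (y k - h (Suc k) *\<^sub>R sharp (gf (y k))) \<le> f (y k - t *\<^sub>R sharp (gf (y k)))) \<and>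
        x (Suc k) = y k - h (Suc k) *\<^sub>R sharp (gf (y k)) \<and>
        A k + a (Suc k) \<noteq> 0 \<and>
        f (y k) - (a (Suc k))\<^sup>2 / (2 * (A k + a (Suc k))) * (dual_norm nrm (gf (y k)))\<^sup>2
          = f (x (Suc k)) \<and>
        (\<forall>a'. A k + a' \<noteq> 0 \<and>
              f (y k) - a'\<^sup>2 / (2 * (A k + a')) * (dual_norm nrm (gf (y k)))\<^sup>2 = f (x (Suc k))
              \<longrightarrow> a' \<le> a (Suc k)))"

end

theory Submission imports Defs begin

text \<open>Every iteration decreases f by at least |g_k|^2/(2L), where g_k is the gradient at y_k
  and |.| the dual norm. The line search of step 1 gives f(y_k) \<le> f(x_k), since \<beta> = 1 is
  admissible. From y_k, the step of length |g_k|/L along the direction -g_k^# brings the quadratic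
  upper model of the descent lemma down to f(y_k) - |g_k|^2/(2L); option (a) minimises that model
  and option (b) minimises f along that ray, so either does at least as well. Summing over
  k = 0..N and using f(x_(N+1)) \<ge> f(x_*) bounds the sum of the N+1 values |g_k|^2 by
  2L(f(x_0) - f(x_*)).\<close>

lemma is_norm_nonneg: "is_norm nrm \<Longrightarrow> 0 \<le> nrm x"
  and is_norm_eq_0_iff: "is_norm nrm \<Longrightarrow> nrm x = 0 \<longleftrightarrow> x = 0"
  and is_norm_scaleR: "is_norm nrm \<Longrightarrow> nrm (c *\<^sub>R x) = \<bar>c\<bar> * nrm x"
  and is_norm_triangle: "is_norm nrm \<Longrightarrow> nrm (x + y) \<le> nrm x + nrm y"
  unfolding is_norm_def by blast+

lemma is_norm_zero: "is_norm nrm \<Longrightarrow> nrm 0 = 0"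
  using is_norm_eq_0_iff by blast

lemma is_norm_minus: "is_norm nrm \<Longrightarrow> nrm (- x) = nrm x"
  using is_norm_scaleR[of nrm "-1" x] by simp

lemma is_norm_pos: "is_norm nrm \<Longrightarrow> x \<noteq> 0 \<Longrightarrow> 0 < nrm x"
  using is_norm_nonneg is_norm_eq_0_iff by (metis less_eq_real_def)

lemma is_norm_minus_commute: "is_norm nrm \<Longrightarrow> nrm (x - y) = nrm (y - x)"
  using is_norm_scaleR[of nrm "-1" "x - y"] by simp

lemma is_norm_sum_le:
  assumes "is_norm nrm"
  shows "nrm (\<Sum>i\<in>S. g i) \<le> (\<Sum>i\<in>S. nrm (g i))"
proof (induction S rule: infinite_finite_induct)
  case (insert i S)
  then show ?case using is_norm_triangle[OF assms, of "g i" "sum g S"] by simp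
qed (simp_all add: is_norm_zero[OF assms])

lemma is_norm_le_norm:
  fixes nrm :: "'a::euclidean_space \<Rightarrow> real"
  assumes "is_norm nrm"
  shows "nrm x \<le> (\<Sum>b\<in>Basis. nrm b) * norm x"
proof -
  have "nrm x = nrm (\<Sum>b\<in>Basis. (x \<bullet> b) *\<^sub>R b)" by (simp add: euclidean_representation)
  also have "\<dots> \<le> (\<Sum>b\<in>Basis. nrm ((x \<bullet> b) *\<^sub>R b))" by (rule is_norm_sum_le[OF assms])
  also have "\<dots> = (\<Sum>b\<in>Basis. \<bar>x \<bullet> b\<bar> * nrm b)" by (simp add: is_norm_scaleR[OF assms])
  also have "\<dots> \<le> (\<Sum>b\<in>Basis. norm x * nrm b)"
    by (intro sum_mono mult_right_mono) (auto simp: Basis_le_norm is_norm_nonneg[OF assms])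
  finally show ?thesis by (simp add: sum_distrib_left mult.commute)
qed

lemma continuous_on_is_norm:
  fixes nrm :: "'a::euclidean_space \<Rightarrow> real"
  assumes "is_norm nrm"
  shows "continuous_on S nrm"
proof (rule lipschitz_on_continuous_on)
  show "(\<Sum>b\<in>Basis. nrm b)-lipschitz_on S nrm"
  proof (rule lipschitz_onI)
    fix u w :: 'a
    have "\<bar>nrm u - nrm w\<bar> \<le> nrm (u - w)"
      using is_norm_triangle[OF assms, of w "u - w"] is_norm_triangle[OF assms, of u "w - u"]
        is_norm_minus_commute[OF assms, of u w] by simp
    also have "\<dots> \<le> (\<Sum>b\<in>Basis. nrm b) * norm (u - w)" by (rule is_norm_le_norm[OF assms])
    finally show "dist (nrm u) (nrm w) \<le> (\<Sum>b\<in>Basis. nrm b) * dist u w"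
      by (simp add: dist_norm dist_real_def)
  qed (simp add: sum_nonneg is_norm_nonneg[OF assms])
qed

text \<open>The constant is the minimum of nrm on the compact Euclidean unit sphere.\<close>
lemma is_norm_ge_norm:
  fixes nrm :: "'a::euclidean_space \<Rightarrow> real"
  assumes "is_norm nrm"
  obtains c where "c > 0" "\<And>x. c * norm x \<le> nrm x"
proof -
  obtain b :: 'a where "b \<in> Basis" using nonempty_Basis by blast
  then have "sphere (0::'a) 1 \<noteq> {}" by (auto intro!: exI[of _ b] simp: norm_Basis)
  then obtain m where m: "m \<in> sphere 0 1" "\<And>z. z \<in> sphere 0 1 \<Longrightarrow> nrm m \<le> nrm z"
    using continuous_attains_inf[OF compact_sphere _ continuous_on_is_norm[OF assms]] by blast
  have "nrm m * norm x \<le> nrm x" for x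
  proof (cases "x = 0")
    case False
    then have "nrm m \<le> nrm ((1 / norm x) *\<^sub>R x)" by (intro m(2)) auto
    then show ?thesis using False by (simp add: is_norm_scaleR[OF assms] field_simps)
  qed (simp add: is_norm_zero[OF assms])
  moreover have "nrm m > 0" using m(1) by (intro is_norm_pos[OF assms]) auto
  ultimately show ?thesis using that by blast
qed

lemma bdd_above_dual_norm:
  fixes nrm :: "'a::euclidean_space \<Rightarrow> real"
  assumes "is_norm nrm"
  shows "bdd_above ((\<lambda>x. g \<bullet> x) ` {x. nrm x \<le> 1})"
proof -
  obtain c where c: "c > 0" "\<And>x. c * norm x \<le> nrm x" using is_norm_ge_norm[OF assms] by blast
  have "g \<bullet> z \<le> norm g / c" if "nrm z \<le> 1" for z
  proof -
    have "norm z \<le> 1 / c" using c order_trans[OF c(2) that] by (simp add: field_simps)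
    then have "norm g * norm z \<le> norm g / c" using mult_left_mono[OF _ norm_ge_zero[of g]] by force
    then show ?thesis using norm_cauchy_schwarz[of g z] by simp
  qed
  then show ?thesis by (intro bdd_aboveI2[where M = "norm g / c"]) auto
qed

lemma inner_le_dual_norm_mult:
  fixes nrm :: "'a::euclidean_space \<Rightarrow> real"
  assumes "is_norm nrm"
  shows "g \<bullet> z \<le> dual_norm nrm g * nrm z"
proof (cases "z = 0")
  case False
  then have p: "nrm z > 0" by (rule is_norm_pos[OF assms])
  then have "(1 / nrm z) *\<^sub>R z \<in> {x. nrm x \<le> 1}" by (simp add: is_norm_scaleR[OF assms])
  then have "g \<bullet> ((1 / nrm z) *\<^sub>R z) \<le> dual_norm nrm g" unfolding dual_norm_def
    by (rule cSup_upper[OF imageI bdd_above_dual_norm[OF assms]])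
  then show ?thesis using p by (simp add: field_simps)
qed (simp add: is_norm_zero[OF assms])

lemma dual_norm_nonneg:
  fixes nrm :: "'a::euclidean_space \<Rightarrow> real"
  assumes "is_norm nrm"
  shows "0 \<le> dual_norm nrm g"
  unfolding dual_norm_def
proof (rule cSup_upper2[OF _ _ bdd_above_dual_norm[OF assms]])
  show "g \<bullet> 0 \<in> (\<lambda>x. g \<bullet> x) ` {x. nrm x \<le> 1}"
    by (rule imageI) (simp add: is_norm_zero[OF assms])
qed simp

lemma has_real_derivative_along_line:
  assumes "GDERIV f (y + t *\<^sub>R s) :> g"
  shows "((\<lambda>t. f (y + t *\<^sub>R s)) has_real_derivative (g \<bullet> s)) (at t)"
proof -
  have "((\<lambda>t. y + t *\<^sub>R s) has_derivative (\<lambda>h. h *\<^sub>R s)) (at t)"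
    by (auto intro!: derivative_eq_intros)
  from diff_chain_at[OF this assms[unfolded gderiv_def]]
  show ?thesis
    by (auto intro: has_derivative_imp_has_field_derivative simp: o_def inner_commute)
qed

text \<open>Descent lemma; the mean value theorem is applied to f along the segment minus its
  quadratic upper model, whose derivative is nonpositive by L-smoothness.\<close>
lemma L_smooth_descent:
  fixes nrm :: "'a::euclidean_space \<Rightarrow> real"
  assumes nrm: "is_norm nrm" and smooth: "L_smooth nrm f gf L"
  shows "f (y + s) \<le> f y + gf y \<bullet> s + L/2 * (nrm s)\<^sup>2"
proof -
  have gderiv: "\<And>x. GDERIV f x :> gf x"
    and lipschitz: "\<And>x z. dual_norm nrm (gf x - gf z) \<le> L * nrm (x - z)"
    using smooth unfolding L_smooth_def by auto
  define \<phi> where "\<phi> t = f (y + t *\<^sub>R s) - t * (gf y \<bullet> s) - L/2 * t\<^sup>2 * (nrm s)\<^sup>2" for t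
  define \<phi>' where "\<phi>' t = gf (y + t *\<^sub>R s) \<bullet> s - gf y \<bullet> s - L * t * (nrm s)\<^sup>2" for t
  have "(\<phi> has_real_derivative \<phi>' t) (at t)" for t
    unfolding \<phi>_def[abs_def] \<phi>'_def
    by (rule derivative_eq_intros has_real_derivative_along_line[OF gderiv] refl | simp)+
  then obtain z where z: "0 < z" "\<phi> 1 - \<phi> 0 = \<phi>' z"
    using MVT2[of 0 1 \<phi> \<phi>'] by auto
  have "(gf (y + z *\<^sub>R s) - gf y) \<bullet> s \<le> dual_norm nrm (gf (y + z *\<^sub>R s) - gf y) * nrm s"
    by (rule inner_le_dual_norm_mult[OF nrm])
  also have "\<dots> \<le> L * nrm (z *\<^sub>R s) * nrm s"
    using lipschitz[of "y + z *\<^sub>R s" y] by (simp add: mult_right_mono is_norm_nonneg[OF nrm])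
  also have "\<dots> = L * z * (nrm s)\<^sup>2"
    using z(1) by (simp add: is_norm_scaleR[OF nrm] power2_eq_square)
  finally have "\<phi>' z \<le> 0" unfolding \<phi>'_def by (simp add: inner_diff_left)
  then show ?thesis using z(2) unfolding \<phi>_def by simp
qed

lemma quadratic_model_sharp_step:
  fixes nrm :: "'a::euclidean_space \<Rightarrow> real"
  assumes nrm: "is_norm nrm" and "L > 0"
    and sharp: "nrm s \<le> 1" "g \<bullet> s = dual_norm nrm g"
  shows "g \<bullet> (- (dual_norm nrm g / L) *\<^sub>R s) + L/2 * (nrm (- (dual_norm nrm g / L) *\<^sub>R s))\<^sup>2
           \<le> - (dual_norm nrm g)\<^sup>2 / (2 * L)"
proof -
  define t where "t = dual_norm nrm g / L"
  have "(nrm (- t *\<^sub>R s))\<^sup>2 = t\<^sup>2 * (nrm s)\<^sup>2"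
    by (simp add: is_norm_minus[OF nrm] is_norm_scaleR[OF nrm] power_mult_distrib)
  also have "\<dots> \<le> t\<^sup>2" using sharp(1) is_norm_nonneg[OF nrm, of s]
    by (simp add: mult_left_le power_le_one)
  finally have "L/2 * (nrm (- t *\<^sub>R s))\<^sup>2 \<le> L/2 * t\<^sup>2" using \<open>L > 0\<close> by simp
  then show ?thesis
    using \<open>L > 0\<close> sharp(2) unfolding t_def by (simp add: power2_eq_square field_simps)
qed

lemma L_smooth_sharp_step_decrease:
  fixes nrm :: "'a::euclidean_space \<Rightarrow> real"
  assumes nrm: "is_norm nrm" and smooth: "L_smooth nrm f gf L"
    and sharp: "nrm s \<le> 1" "gf y \<bullet> s = dual_norm nrm (gf y)"
  shows "f (y - (dual_norm nrm (gf y) / L) *\<^sub>R s) \<le> f y - (dual_norm nrm (gf y))\<^sup>2 / (2 * L)"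
proof -
  have "L > 0" using smooth by (simp add: L_smooth_def)
  from quadratic_model_sharp_step[OF nrm this sharp]
    L_smooth_descent[OF nrm smooth, of y "- (dual_norm nrm (gf y) / L) *\<^sub>R s"]
  show ?thesis by simp
qed

lemma AGMsDR_line_search_le:
  assumes "AGMsDR_common f gf d gd N x0 x y v A a \<beta>" "k \<le> N"
  shows "f (y k) \<le> f (x k)"
proof -
  have "\<forall>b\<in>{0..1::real}. f (y k) \<le> f (v k + b *\<^sub>R (x k - v k))"
    using assms unfolding AGMsDR_common_def by auto
  then have "f (y k) \<le> f (v k + 1 *\<^sub>R (x k - v k))" by (metis atLeastAtMost_iff order_refl zero_le_one)
  then show ?thesis by simp
qed

lemma AGMsDR_gradient_step_decrease:
  fixes nrm :: "'a::euclidean_space \<Rightarrow> real"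
  assumes nrm: "is_norm nrm" and smooth: "L_smooth nrm f gf L"
    and sharp: "\<forall>g. nrm (sharp g) \<le> 1 \<and> g \<bullet> sharp g = dual_norm nrm g"
    and options: "AGMsDR_option_a nrm f gf L N x y A a \<or> AGMsDR_option_b nrm sharp f gf N x y A a h"
    and "k \<le> N"
  shows "f (x (Suc k)) \<le> f (y k) - (dual_norm nrm (gf (y k)))\<^sup>2 / (2 * L)"
proof -
  let ?s = "sharp (gf (y k))"
  let ?t = "dual_norm nrm (gf (y k)) / L"
  let ?model = "\<lambda>z. f (y k) + gf (y k) \<bullet> (z - y k) + L / 2 * (nrm (z - y k))\<^sup>2"
  have sharp_step: "f (y k - ?t *\<^sub>R ?s) \<le> f (y k) - (dual_norm nrm (gf (y k)))\<^sup>2 / (2 * L)"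
    using sharp by (intro L_smooth_sharp_step_decrease[OF nrm smooth]) auto
  from options show ?thesis
  proof
    assume "AGMsDR_option_a nrm f gf L N x y A a"
    then have "?model (x (Suc k)) \<le> ?model (y k - ?t *\<^sub>R ?s)"
      using \<open>k \<le> N\<close> unfolding AGMsDR_option_a_def by blast
    also have "\<dots> \<le> f (y k) - (dual_norm nrm (gf (y k)))\<^sup>2 / (2 * L)"
      using quadratic_model_sharp_step[OF nrm _, of L ?s "gf (y k)"] sharp smooth
      by (simp add: L_smooth_def)
    finally show ?thesis
      using L_smooth_descent[OF nrm smooth, of "y k" "x (Suc k) - y k"] by simp
  next
    assume "AGMsDR_option_b nrm sharp f gf N x y A a h"
    moreover have "?t \<ge> 0"
      using dual_norm_nonneg[OF nrm] smooth by (simp add: L_smooth_def)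
    ultimately have "f (x (Suc k)) \<le> f (y k - ?t *\<^sub>R ?s)"
      using \<open>k \<le> N\<close> unfolding AGMsDR_option_b_def by metis
    then show ?thesis using sharp_step by linarith
  qed
qed

lemma telescoping_decrease:
  fixes u c :: "nat \<Rightarrow> real"
  assumes "\<And>k. k < n \<Longrightarrow> u (Suc k) \<le> u k - c k"
  shows "u n \<le> u 0 - (\<Sum>k<n. c k)"
  using assms by (induction n) force+

lemma Min_le_sum_div_card:
  fixes c :: "nat \<Rightarrow> real"
  shows "(MIN k\<in>{0..N}. c k) \<le> (\<Sum>k<Suc N. c k) / real (Suc N)"
proof -
  have "(\<Sum>k<Suc N. MIN k\<in>{0..N}. c k) \<le> (\<Sum>k<Suc N. c k)"
    by (intro sum_mono Min_le) auto
  then show ?thesis by (simp add: field_simps)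
qed

theorem mainTheorem2:
  fixes nrm :: "'a::euclidean_space \<Rightarrow> real"
    and sharp :: "'a \<Rightarrow> 'a"
    and f d :: "'a \<Rightarrow> real" and gf gd :: "'a \<Rightarrow> 'a"
    and L :: real and N :: nat and x0 xstar :: 'a
    and x y v :: "nat \<Rightarrow> 'a" and A a \<beta> h :: "nat \<Rightarrow> real"
  assumes "is_norm nrm"
    and "\<forall>g. nrm (sharp g) \<le> 1 \<and> g \<bullet> sharp g = dual_norm nrm g"
    and "prox_function nrm d gd"
    and "L_smooth nrm f gf L"
    and "\<forall>z. f xstar \<le> f z"
    and "N \<ge> 1"
    and "AGMsDR_common f gf d gd N x0 x y v A a \<beta>"
    and "AGMsDR_option_a nrm f gf L N x y A a \<or> AGMsDR_option_b nrm sharp f gf N x y A a h"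
    and "\<forall>k\<le>N. gf (y k) \<noteq> 0"
  shows "(MIN k\<in>{0..N}. (dual_norm nrm (gf (y k)))\<^sup>2) \<le> 2 * L * (f x0 - f xstar) / real N"
proof -
  let ?c = "\<lambda>k. (dual_norm nrm (gf (y k)))\<^sup>2"
  have "L > 0" using assms(4) by (simp add: L_smooth_def)
  have "f (x (Suc k)) \<le> f (x k) - ?c k / (2 * L)" if "k < Suc N" for k
    using AGMsDR_gradient_step_decrease[OF assms(1,4,2,8), of k] AGMsDR_line_search_le[OF assms(7), of k] that
    by simp
  then have "f (x (Suc N)) \<le> f (x 0) - (\<Sum>k<Suc N. ?c k) / (2 * L)"
    unfolding sum_divide_distrib by (rule telescoping_decrease)
  moreover have "x 0 = x0" using assms(7) by (simp add: AGMsDR_common_def)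
  moreover have "f xstar \<le> f (x (Suc N))" using assms(5) by blast
  ultimately have "(\<Sum>k<Suc N. ?c k) / (2 * L) \<le> f x0 - f xstar" by simp
  then have sum_bound: "(\<Sum>k<Suc N. ?c k) \<le> 2 * L * (f x0 - f xstar)"
    using \<open>L > 0\<close> by (simp add: divide_le_eq mult.commute)
  have "(MIN k\<in>{0..N}. ?c k) \<le> (\<Sum>k<Suc N. ?c k) / real (Suc N)"
    by (rule Min_le_sum_div_card)
  also have "\<dots> \<le> (\<Sum>k<Suc N. ?c k) / real N"
    using assms(6) by (simp add: sum_nonneg frac_le)
  also have "\<dots> \<le> 2 * L * (f x0 - f xstar) / real N"
    using sum_bound by (simp add: divide_right_mono)
  finally show ?thesis .
qed

end
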